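(* For $k\in\mathbb{N}^*$ and $0\le r\le k-1$, in $P=\mathbb{Z}[x_1,\dots,x_k,y_1,\dots,y_k]$ we have \[\alpha(k-1,k)\beta(r+1,k)-\alpha(r,k)\beta(k,k)=(-1)^{r+1}y_ky_1\cdots y_r\,\alpha_{r+1}(k-r-2,k).\]
   Context: In $P$ indices are periodic: $x_{i+k}:=x_i$, $y_{i+k}:=y_i$. For $f\in P$ and $s\in\mathbb{N}$ the shift is $f_s:=f(x_{s+1},\dots,x_{s+k},y_{s+1},\dots,y_{s+k})$, and $\alpha_s(r,k):=(\alpha(r,k))_s$. Write $[r]=\{1,\dots,r\}$ ($\emptyset$ if $r\le0$) and $S+1=\{s+1:s\in S\}$. For $0\le r\le k$, $\alpha(r,k):=\sum_{S}\prod_{i\in S}y_i\prod_{j\in[r]\setminus(S\cup(S+1))}x_j$, summed over subsets $S\subseteq\{1,\dots,r-1\}$ with no two consecutive integers (so $\alpha(0,k)=1$); $\alpha(-1,k):=0$. Also $\beta(0,k)=\beta(1,k):=0$ and, for $2\le r\le k+1$, $\beta(r,k):=\sum_S y_k\prod_{i\in S}y_i\prod_{j\in\{2,\dots,r-1\}\setminus(S\cup(S+1))}x_j$, summed over subsets $S\subseteq\{2,\dots,r-2\}$ with no two consecutive integers. *)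

theory Defs
  imports Main
begin

text \<open>Polynomials in Z[x_1..x_k,y_1..y_k] are represented by their evaluations:
  the variables are given as functions x, y :: nat => 'a into an arbitrary
  commutative ring (only indices 1..k are used). An identity holding for all
  such evaluations is exactly the polynomial identity in P.\<close>

definition noncons :: "nat set \<Rightarrow> bool" where
  "noncons S \<longleftrightarrow> (\<forall>i\<in>S. Suc i \<notin> S)"

text \<open>Periodic extension of indices: x_{i+k} = x_i (index 0 means k).\<close>
definition per :: "nat \<Rightarrow> (nat \<Rightarrow> 'a) \<Rightarrow> nat \<Rightarrow> 'a" where
  "per k x i = x ((i + k - 1) mod k + 1)"

definition alpha0 :: "(nat \<Rightarrow> 'a::comm_ring_1) \<Rightarrow> (nat \<Rightarrow> 'a) \<Rightarrow> int \<Rightarrow> 'a" where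
  "alpha0 X Y r = (if r < 0 then 0 else
     (\<Sum>S\<in>{S. S \<subseteq> {1..<nat r} \<and> noncons S}.
        (\<Prod>i\<in>S. Y i) * (\<Prod>j\<in>{1..nat r} - (S \<union> Suc ` S). X j)))"

definition beta0 :: "nat \<Rightarrow> (nat \<Rightarrow> 'a::comm_ring_1) \<Rightarrow> (nat \<Rightarrow> 'a) \<Rightarrow> nat \<Rightarrow> 'a" where
  "beta0 k X Y r = (if r < 2 then 0 else
     (\<Sum>S\<in>{S. S \<subseteq> {2..r-2} \<and> noncons S}.
        Y k * (\<Prod>i\<in>S. Y i) * (\<Prod>j\<in>{2..r-1} - (S \<union> Suc ` S). X j)))"

definition alpha :: "nat \<Rightarrow> nat \<Rightarrow> (nat \<Rightarrow> 'a::comm_ring_1) \<Rightarrow> (nat \<Rightarrow> 'a) \<Rightarrow> int \<Rightarrow> 'a" where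
  "alpha k s x y r = alpha0 (\<lambda>i. per k x (s + i)) (\<lambda>i. per k y (s + i)) r"

definition beta :: "nat \<Rightarrow> (nat \<Rightarrow> 'a::comm_ring_1) \<Rightarrow> (nat \<Rightarrow> 'a) \<Rightarrow> nat \<Rightarrow> 'a" where
  "beta k x y r = beta0 k (per k x) (per k y) r"

end

theory Submission
  imports Defs
begin

text \<open>alpha(r,k) is the continuant K(r+1) of the sequences x, y, and beta(r+1,k) is y_k times
  the continuant K'(r) of the sequences shifted by one: splitting the sum over non-consecutive
  subsets according to whether the last admissible index is used gives the recurrence
  K(n+2) = X(n+1) K(n+1) + Y(n) K(n). For fixed r the cross difference
  D(n) = K(n+1) K'(r) - K(r+1) K'(n) satisfies the same recurrence in n, with D(r) = 0 and
  D(r+1) = (-1)^(r+1) Y(1)...Y(r), the classical continuant determinant. Hence D(r+j) is this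
  constant times the continuant of the sequences shifted by r+1.\<close>

fun continuant :: "(nat \<Rightarrow> 'a::comm_ring_1) \<Rightarrow> (nat \<Rightarrow> 'a) \<Rightarrow> nat \<Rightarrow> 'a" where
  "continuant X Y 0 = 0"
| "continuant X Y (Suc 0) = 1"
| "continuant X Y (Suc (Suc n)) = X (Suc n) * continuant X Y (Suc n) + Y n * continuant X Y n"

definition shift :: "nat \<Rightarrow> (nat \<Rightarrow> 'a) \<Rightarrow> nat \<Rightarrow> 'a" where
  "shift s X i = X (s + i)"

lemma shift_0 [simp]: "shift 0 X = X"
  by (simp add: shift_def fun_eq_iff)

definition noncons_subsets :: "nat \<Rightarrow> nat \<Rightarrow> nat set set" where
  "noncons_subsets s n = {S. S \<subseteq> {s+1..<s+n} \<and> noncons S}"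

definition noncons_monomial ::
    "(nat \<Rightarrow> 'a::comm_ring_1) \<Rightarrow> (nat \<Rightarrow> 'a) \<Rightarrow> nat \<Rightarrow> nat \<Rightarrow> nat set \<Rightarrow> 'a" where
  "noncons_monomial X Y s n S = (\<Prod>i\<in>S. Y i) * (\<Prod>j\<in>{s+1..s+n} - (S \<union> Suc ` S). X j)"

lemma finite_noncons_subsets: "finite (noncons_subsets s n)"
  unfolding noncons_subsets_def by (rule finite_subset[of _ "Pow {s+1..<s+n}"]) auto

lemma noncons_subsets_Suc_Suc:
  "noncons_subsets s (Suc (Suc n))
     = noncons_subsets s (Suc n) \<union> insert (Suc (s+n)) ` noncons_subsets s n"
proof (intro equalityI subsetI)
  fix S assume S: "S \<in> noncons_subsets s (Suc (Suc n))"
  show "S \<in> noncons_subsets s (Suc n) \<union> insert (Suc (s+n)) ` noncons_subsets s n"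
  proof (cases "Suc (s+n) \<in> S")
    case True
    then have "S - {Suc (s+n)} \<in> noncons_subsets s n"
      using S by (fastforce simp: noncons_subsets_def noncons_def subset_iff less_Suc_eq)
    moreover have "S = insert (Suc (s+n)) (S - {Suc (s+n)})" using True by auto
    ultimately show ?thesis by blast
  qed (use S in \<open>auto simp: noncons_subsets_def less_Suc_eq\<close>)
next
  fix S assume "S \<in> noncons_subsets s (Suc n) \<union> insert (Suc (s+n)) ` noncons_subsets s n"
  then show "S \<in> noncons_subsets s (Suc (Suc n))"
    by (auto simp: noncons_subsets_def noncons_def)
qed

lemma noncons_monomial_Suc_Suc:
  assumes "S \<in> noncons_subsets s (Suc n)"
  shows "noncons_monomial X Y s (Suc (Suc n)) S
    = X (Suc (Suc (s+n))) * noncons_monomial X Y s (Suc n) S"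
proof -
  have "{s+1..s + Suc (Suc n)} - (S \<union> Suc ` S)
      = insert (Suc (Suc (s+n))) ({s+1..s + Suc n} - (S \<union> Suc ` S))"
    using assms unfolding noncons_subsets_def by auto
  then show ?thesis unfolding noncons_monomial_def by (simp add: algebra_simps)
qed

lemma noncons_monomial_insert:
  assumes "S \<in> noncons_subsets s n"
  shows "noncons_monomial X Y s (Suc (Suc n)) (insert (Suc (s+n)) S)
    = Y (Suc (s+n)) * noncons_monomial X Y s n S"
proof -
  have "Suc (s+n) \<notin> S" and "finite S"
    using assms unfolding noncons_subsets_def by (auto intro: finite_subset)
  moreover have "{s+1..s + Suc (Suc n)} - (insert (Suc (s+n)) S \<union> Suc ` insert (Suc (s+n)) S)
      = {s+1..s+n} - (S \<union> Suc ` S)"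
    using assms unfolding noncons_subsets_def by auto
  ultimately show ?thesis unfolding noncons_monomial_def by (simp add: algebra_simps)
qed

lemma sum_noncons_monomial_eq_continuant:
  "(\<Sum>S\<in>noncons_subsets s n. noncons_monomial X Y s n S)
     = continuant (shift s X) (shift s Y) (Suc n)"
proof (induction n rule: induct_nat_012)
  case 0
  have "noncons_subsets s 0 = {{}}" by (auto simp: noncons_subsets_def noncons_def)
  then show ?case by (simp add: noncons_monomial_def)
next
  case 1
  have "noncons_subsets s 1 = {{}}" by (auto simp: noncons_subsets_def noncons_def)
  then show ?case by (simp add: noncons_monomial_def shift_def)
next
  case (ge2 n)
  have "inj_on (insert (Suc (s+n))) (noncons_subsets s n)"
  proof (rule inj_onI)
    fix A B assume "A \<in> noncons_subsets s n" "B \<in> noncons_subsets s n"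
      and eq: "insert (Suc (s+n)) A = insert (Suc (s+n)) B"
    then have "Suc (s+n) \<notin> A" "Suc (s+n) \<notin> B" by (auto simp: noncons_subsets_def)
    with eq show "A = B" by (simp add: insert_ident)
  qed
  moreover have "noncons_subsets s (Suc n) \<inter> insert (Suc (s+n)) ` noncons_subsets s n = {}"
    by (auto simp: noncons_subsets_def)
  ultimately have "(\<Sum>S\<in>noncons_subsets s (Suc (Suc n)). noncons_monomial X Y s (Suc (Suc n)) S)
      = X (Suc (Suc (s+n))) * (\<Sum>S\<in>noncons_subsets s (Suc n). noncons_monomial X Y s (Suc n) S)
        + Y (Suc (s+n)) * (\<Sum>S\<in>noncons_subsets s n. noncons_monomial X Y s n S)"
    unfolding noncons_subsets_Suc_Suc
    by (simp add: sum.union_disjoint finite_noncons_subsets sum.reindex sum_distrib_left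
        noncons_monomial_Suc_Suc noncons_monomial_insert)
  with ge2.IH show ?case by (simp add: shift_def)
qed

lemma alpha_eq_continuant:
  "alpha k s x y (int m - 1) = continuant (shift s (per k x)) (shift s (per k y)) m"
proof (cases m)
  case 0
  then show ?thesis by (simp add: alpha_def alpha0_def)
next
  case (Suc n)
  then show ?thesis
    using sum_noncons_monomial_eq_continuant[of "shift s (per k x)" "shift s (per k y)" 0 n]
    by (simp add: alpha_def alpha0_def noncons_subsets_def noncons_monomial_def shift_def)
qed

lemma beta_eq_continuant:
  "beta k x y (Suc m) = per k y k * continuant (shift 1 (per k x)) (shift 1 (per k y)) m"
proof (cases m)
  case 0
  then show ?thesis by (simp add: beta_def beta0_def)
next
  case (Suc n)
  then show ?thesis
    using sum_noncons_monomial_eq_continuant[of "per k x" "per k y" 1 n]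
    by (simp add: beta_def beta0_def noncons_subsets_def noncons_monomial_def
        numeral_2_eq_2 atLeastLessThanSuc_atLeastAtMost mult.assoc flip: sum_distrib_left)
qed

lemma continuant_det_shift:
  "continuant X Y (Suc (Suc r)) * continuant (shift 1 X) (shift 1 Y) r
     - continuant X Y (Suc r) * continuant (shift 1 X) (shift 1 Y) (Suc r)
   = (-1) ^ (r+1) * (\<Prod>i\<in>{1..r}. Y i)"
proof (induction r)
  case 0
  show ?case by simp
next
  case (Suc r)
  let ?P = "continuant X Y" and ?Q = "continuant (shift 1 X) (shift 1 Y)"
  have P: "?P (Suc (Suc (Suc r))) = X (Suc (Suc r)) * ?P (Suc (Suc r)) + Y (Suc r) * ?P (Suc r)"
    and Q: "?Q (Suc (Suc r)) = X (Suc (Suc r)) * ?Q (Suc r) + Y (Suc r) * ?Q r"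
    by (simp_all add: shift_def)
  have "?P (Suc (Suc (Suc r))) * ?Q (Suc r) - ?P (Suc (Suc r)) * ?Q (Suc (Suc r))
      = - Y (Suc r) * (?P (Suc (Suc r)) * ?Q r - ?P (Suc r) * ?Q (Suc r))"
    unfolding P Q by (simp add: algebra_simps del: continuant.simps)
  also have "\<dots> = (-1) ^ (Suc r + 1) * (\<Prod>i\<in>{1..Suc r}. Y i)"
    unfolding Suc.IH by (simp add: atLeastAtMostSuc_conv)
  finally show ?case .
qed

lemma continuant_cross_diff:
  "continuant X Y (r+1+j) * continuant (shift 1 X) (shift 1 Y) r
     - continuant X Y (r+1) * continuant (shift 1 X) (shift 1 Y) (r+j)
   = (-1) ^ (r+1) * (\<Prod>i\<in>{1..r}. Y i) * continuant (shift (r+1) X) (shift (r+1) Y) j"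
proof (induction j rule: induct_nat_012)
  case 0
  show ?case by simp
next
  case 1
  show ?case using continuant_det_shift[of X Y r] by simp
next
  case (ge2 j)
  let ?P = "continuant X Y" and ?Q = "continuant (shift 1 X) (shift 1 Y)"
    and ?R = "continuant (shift (r+1) X) (shift (r+1) Y)"
    and ?c = "(-1) ^ (r+1) * (\<Prod>i\<in>{1..r}. Y i) :: 'a"
  have P: "?P (r+1+Suc (Suc j)) = X (r+j+2) * ?P (r+1+Suc j) + Y (r+j+1) * ?P (r+1+j)"
    and Q: "?Q (r+Suc (Suc j)) = X (r+j+2) * ?Q (r+Suc j) + Y (r+j+1) * ?Q (r+j)"
    and R: "?R (Suc (Suc j)) = X (r+j+2) * ?R (Suc j) + Y (r+j+1) * ?R j"
    by (simp_all add: shift_def)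
  have "?P (r+1+Suc (Suc j)) * ?Q r - ?P (r+1) * ?Q (r+Suc (Suc j))
      = X (r+j+2) * (?P (r+1+Suc j) * ?Q r - ?P (r+1) * ?Q (r+Suc j))
        + Y (r+j+1) * (?P (r+1+j) * ?Q r - ?P (r+1) * ?Q (r+j))"
    unfolding P Q by (simp add: algebra_simps del: continuant.simps)
  also have "\<dots> = ?c * ?R (Suc (Suc j))"
    unfolding ge2.IH R by (simp add: algebra_simps del: continuant.simps)
  finally show ?case .
qed

lemma per_eq:
  assumes "1 \<le> i" and "i \<le> k"
  shows "per k x i = x i"
  using assms by (cases i) (auto simp: per_def)

theorem lemma4p2:
  fixes x y :: "nat \<Rightarrow> 'a::comm_ring_1" and k r :: nat
  assumes "k \<ge> 1" and "r \<le> k - 1"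
  shows "alpha k 0 x y (int k - 1) * beta k x y (r + 1) - alpha k 0 x y (int r) * beta k x y k
         = (-1) ^ (r + 1) * y k * (\<Prod>i\<in>{1..r}. y i) * alpha k (r + 1) x y (int k - int r - 2)"
proof -
  define j where "j = k - (r + 1)"
  have k: "r + 1 + j = k" using assms unfolding j_def by simp
  have exponent: "int k - int r - 2 = int j - 1" by (simp flip: k)
  let ?P = "continuant (per k x) (per k y)"
    and ?Q = "continuant (shift 1 (per k x)) (shift 1 (per k y))"
    and ?R = "continuant (shift (r+1) (per k x)) (shift (r+1) (per k y))"
  have "alpha k 0 x y (int k - 1) = ?P (r + 1 + j)"
    unfolding k using alpha_eq_continuant[of k 0 x y k] by simp
  moreover have "alpha k 0 x y (int r) = ?P (r + 1)"
    using alpha_eq_continuant[of k 0 x y "r + 1"] by simp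
  moreover have "beta k x y (r + 1) = per k y k * ?Q r"
    using beta_eq_continuant[of k x y r] by simp
  moreover have "beta k x y k = per k y k * ?Q (r + j)"
    using beta_eq_continuant[of k x y "r + j"] k by simp
  ultimately have "alpha k 0 x y (int k - 1) * beta k x y (r + 1) - alpha k 0 x y (int r) * beta k x y k
      = per k y k * (?P (r + 1 + j) * ?Q r - ?P (r + 1) * ?Q (r + j))"
    by (simp add: algebra_simps del: continuant.simps)
  also have "\<dots> = per k y k * ((-1) ^ (r + 1) * (\<Prod>i\<in>{1..r}. per k y i) * ?R j)"
    by (simp only: continuant_cross_diff)
  also have "(\<Prod>i\<in>{1..r}. per k y i) = (\<Prod>i\<in>{1..r}. y i)"
    using assms by (intro prod.cong) (auto simp: per_eq)
  also have "per k y k = y k"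
    using assms by (simp add: per_eq)
  also have "?R j = alpha k (r + 1) x y (int k - int r - 2)"
    unfolding exponent by (simp only: alpha_eq_continuant)
  finally show ?thesis by (simp only: mult_ac)
qed

end
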